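(* For an idempotent semiring $S$ the following are equivalent: (1) $S$ satisfies $x\approx xyx+x+xyx$ (equivalently, $\mathcal{D}^{\bullet}$ is the least distributive lattice congruence on $S$); (2) $S$ satisfies both identities $xz\approx xz+xyz$ and $xz\approx xyz+xz$; (3) $S$ satisfies $xz\approx xyz+xz+xyz$.
   Context: An idempotent semiring is an algebra $(S,+,\cdot)$ with $(S,+)$, $(S,\cdot)$ bands and both distributive laws; addition not assumed commutative. $a\,\mathcal{D}^{\bullet}\,b$ iff $aba=a$ and $bab=b$. A distributive lattice congruence is a congruence $\rho$ with $S/\rho$ satisfying $x+y\approx y+x$, $xy\approx yx$, $x+xy\approx x$. *)

theory Defs
  imports Main
begin

text \<open>An idempotent semiring (S,+,.): both reducts are bands (associative and
idempotent), and both distributive laws hold. Addition is not assumed commutative.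
The carrier is the whole type 'a.\<close>

definition idem_semiring :: "('a \<Rightarrow> 'a \<Rightarrow> 'a) \<Rightarrow> ('a \<Rightarrow> 'a \<Rightarrow> 'a) \<Rightarrow> bool" where
  "idem_semiring add mult \<longleftrightarrow>
     (\<forall>x y z. add (add x y) z = add x (add y z)) \<and>
     (\<forall>x. add x x = x) \<and>
     (\<forall>x y z. mult (mult x y) z = mult x (mult y z)) \<and>
     (\<forall>x. mult x x = x) \<and>
     (\<forall>x y z. mult x (add y z) = add (mult x y) (mult x z)) \<and>
     (\<forall>x y z. mult (add x y) z = add (mult x z) (mult y z))"

end

theory Submission
  imports Defs
begin

text \<open>Both directions of the equivalences reduce to the one-sided identities
  \<open>x = x + xyx\<close> and \<open>x = xyx + x\<close>, since in a band \<open>a = b + a + b\<close> holds iff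
  \<open>a = a + b\<close> and \<open>a = b + a\<close>. The substantial step is that \<open>x = x + xyx\<close>
  forces \<open>xz = xz + xyz\<close>: squaring \<open>xz + xyz = x(x + y)z = x(z + y)z\<close> and
  using \<open>zxz = zx(x + y)z\<close> gives \<open>(xz + xyz)xz = xz + xyzxz\<close>, which the identity
  collapses to \<open>xz\<close>. The identity with the summands reversed follows by
  applying this to the semiring with the opposite addition.\<close>

locale idempotent_semiring =
  fixes add :: "'a \<Rightarrow> 'a \<Rightarrow> 'a" (infixl "\<oplus>" 65)
    and mult :: "'a \<Rightarrow> 'a \<Rightarrow> 'a" (infixl "\<odot>" 70)
  assumes add_assoc: "a \<oplus> b \<oplus> c = a \<oplus> (b \<oplus> c)"
    and add_idem: "a \<oplus> a = a"
    and mult_assoc: "a \<odot> b \<odot> c = a \<odot> (b \<odot> c)"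
    and mult_idem: "a \<odot> a = a"
    and distrib_left: "a \<odot> (b \<oplus> c) = a \<odot> b \<oplus> a \<odot> c"
    and distrib_right: "(a \<oplus> b) \<odot> c = a \<odot> c \<oplus> b \<odot> c"

lemma idempotent_semiring_if_idem_semiring:
  "idem_semiring add mult \<Longrightarrow> idempotent_semiring add mult"
  unfolding idem_semiring_def by unfold_locales blast+

context idempotent_semiring
begin

lemma mult_idem_left: "a \<odot> (a \<odot> b) = a \<odot> b"
  by (metis mult_assoc mult_idem)

lemma mult_idem_pair: "a \<odot> (b \<odot> (a \<odot> b)) = a \<odot> b"
  by (metis mult_assoc mult_idem)

lemma mult_idem_pair_left: "a \<odot> (b \<odot> (a \<odot> (b \<odot> c))) = a \<odot> (b \<odot> c)"
  by (metis mult_assoc mult_idem)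

lemma sandwich_eq_iff: "a = b \<oplus> a \<oplus> b \<longleftrightarrow> a = a \<oplus> b \<and> a = b \<oplus> a"
  by (metis add_assoc add_idem)

lemma absorb_middle_factor:
  assumes absorb: "\<And>x y. x = x \<oplus> x \<odot> y \<odot> x"
  shows "x \<odot> z = x \<odot> z \<oplus> x \<odot> y \<odot> z"
proof -
  have zxz: "z \<odot> x \<odot> z = z \<odot> x \<odot> (x \<oplus> y) \<odot> z"
  proof -
    have "z \<odot> x \<odot> z = z \<odot> x \<odot> (z \<oplus> z \<odot> (x \<odot> y) \<odot> z)"
      using absorb by simp
    then show ?thesis
      by (simp add: distrib_left distrib_right mult_assoc mult_idem mult_idem_left mult_idem_pair_left)
  qed
  have xz: "x \<odot> z = x \<odot> z \<oplus> x \<odot> y \<odot> z \<odot> x \<odot> z"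
  proof -
    have "x \<odot> z = (x \<oplus> x \<odot> (y \<odot> z) \<odot> x) \<odot> z"
      using absorb by simp
    then show ?thesis by (simp add: distrib_right mult_assoc)
  qed
  have swap: "x \<odot> (x \<oplus> y) \<odot> z = x \<odot> (z \<oplus> y) \<odot> z"
    by (simp add: distrib_left distrib_right mult_assoc mult_idem mult_idem_left)
  have "x \<odot> z \<oplus> x \<odot> y \<odot> z = x \<odot> (x \<oplus> y) \<odot> z \<odot> (x \<odot> (x \<oplus> y) \<odot> z)"
    by (simp add: mult_idem distrib_left distrib_right mult_idem_left)
  also have "\<dots> = x \<odot> (z \<oplus> y) \<odot> (z \<odot> x \<odot> (x \<oplus> y) \<odot> z)"
    by (metis swap mult_assoc)
  also have "\<dots> = x \<odot> (z \<oplus> y) \<odot> (z \<odot> x \<odot> z)"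
    by (metis zxz mult_assoc)
  also have "\<dots> = (x \<odot> z \<oplus> x \<odot> y \<odot> z) \<odot> x \<odot> z"
    by (simp add: distrib_left distrib_right mult_assoc mult_idem mult_idem_left)
  also have "\<dots> = x \<odot> z"
    by (simp add: distrib_right mult_assoc mult_idem_pair flip: xz[simplified mult_assoc])
  finally show ?thesis ..
qed

lemma left_absorption_iff:
  "(\<forall>x y. x = x \<oplus> x \<odot> y \<odot> x) \<longleftrightarrow> (\<forall>x y z. x \<odot> z = x \<odot> z \<oplus> x \<odot> y \<odot> z)"
proof
  assume "\<forall>x y. x = x \<oplus> x \<odot> y \<odot> x"
  then show "\<forall>x y z. x \<odot> z = x \<odot> z \<oplus> x \<odot> y \<odot> z"
    using absorb_middle_factor by blast
next
  assume "\<forall>x y z. x \<odot> z = x \<odot> z \<oplus> x \<odot> y \<odot> z"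
  then show "\<forall>x y. x = x \<oplus> x \<odot> y \<odot> x"
    by (metis mult_idem)
qed

lemma right_absorption_iff:
  "(\<forall>x y. x = x \<odot> y \<odot> x \<oplus> x) \<longleftrightarrow> (\<forall>x y z. x \<odot> z = x \<odot> y \<odot> z \<oplus> x \<odot> z)"
proof -
  interpret opposite: idempotent_semiring "\<lambda>a b. b \<oplus> a" "(\<odot>)"
    by unfold_locales (simp_all add: add_assoc add_idem mult_assoc mult_idem distrib_left distrib_right)
  show ?thesis using opposite.left_absorption_iff .
qed

end

theorem lemma4p5:
  fixes add mult :: "'a \<Rightarrow> 'a \<Rightarrow> 'a"
  assumes "idem_semiring add mult"
  shows "((\<forall>x y. x = add (add (mult (mult x y) x) x) (mult (mult x y) x))
            \<longleftrightarrow>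
          ((\<forall>x y z. mult x z = add (mult x z) (mult (mult x y) z)) \<and>
           (\<forall>x y z. mult x z = add (mult (mult x y) z) (mult x z))))
       \<and>
         ((\<forall>x y z. mult x z = add (mult x z) (mult (mult x y) z)) \<and>
          (\<forall>x y z. mult x z = add (mult (mult x y) z) (mult x z))
            \<longleftrightarrow>
          (\<forall>x y z. mult x z = add (add (mult (mult x y) z) (mult x z)) (mult (mult x y) z)))"
proof -
  interpret idempotent_semiring add mult
    using assms by (rule idempotent_semiring_if_idem_semiring)
  show ?thesis
    using sandwich_eq_iff left_absorption_iff right_absorption_iff by blast
qed

end
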